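(* Let $0<c\le1<F$ be constants. For every $\varepsilon>0$ there exists $s_1>0$ such that for all $s\ge s_1$, every dynamic monotone function and every initial search point $x^0$ with $Z^0\ge\varepsilon n$ (and $\lambda^0=1$), with high probability the number of generations of the SA-$(1,\lambda)$-EA with success ratio $s$, update strength $F$ and mutation probability $c/n$ is $e^{\Omega(n/\log^2 n)}$.
   Context: Fix $n\in\mathbb N$ and constants $c>0$, $s>0$, $F>1$; asymptotic statements are as $n\to\infty$ with $c,s,F$ fixed, and "with high probability" means with probability $1-o(1)$. A function $f:\{0,1\}^n\to\mathbb R$ is (strictly) monotone if $f(x)>f(y)$ for all $x\ne y$ with $x_i\ge y_i$ for all $i$. A dynamic monotone function is a sequence $(f^t)_{t\ge0}$ of monotone functions, where $f^t$ may be chosen adversarially depending on the run so far, including $x^t$. The SA-$(1,\lambda)$-EA with success ratio $s$, update strength $F$ and mutation probability $c/n$ maintains $x^t\in\{0,1\}^n$ and a real $\lambda^t\ge1$. Unless stated otherwise $x^0$ is uniform on $\{0,1\}^n$ and $\lambda^0=1$. In generation $t=0,1,\dots$ it creates $\lfloor\lambda^t\rceil$ offspring $y^{t,1},\dots,y^{t,\lfloor\lambda^t\rceil}$ ($\lfloor\cdot\rceil$ = nearest integer), each independently obtained from $x^t$ by flipping every bit independently with probability $c/n$; lets $y^t$ be an offspring maximizing $f^t$ (ties broken uniformly at random); sets $\lambda^{t+1}=\max\{1,\lambda^t/F\}$ if $f^t(y^t)>f^t(x^t)$ and $\lambda^{t+1}=F^{1/s}\lambda^t$ otherwise; and sets $x^{t+1}=y^t$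 (even if worse). The number of generations is the first $T$ with $x^T=(1,\dots,1)$; the number of function evaluations is $\sum_{t<T}\lfloor\lambda^t\rceil$. $Z^t$ denotes the number of zero-bits of $x^t$. *)

theory Defs
  imports "HOL-Probability.Probability"
begin

text \<open>Search points are bool lists of length n (True = one-bit).
  A history records, for each past generation, the parent, the offspring
  population parameter lambda and the list of offspring created.\<close>

type_synonym hist = "(bool list \<times> real \<times> bool list list) list"
type_synonym adversary = "hist \<Rightarrow> bool list \<Rightarrow> real \<Rightarrow> (bool list \<Rightarrow> real)"

definition strictly_monotone :: "nat \<Rightarrow> (bool list \<Rightarrow> real) \<Rightarrow> bool" where
  "strictly_monotone n f \<longleftrightarrow>
     (\<forall>x y. length x = n \<longrightarrow> length y = n \<longrightarrow> x \<noteq> y \<longrightarrow>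
        (\<forall>i<n. y ! i \<le> x ! i) \<longrightarrow> f y < f x)"

text \<open>A dynamic monotone function: the adversary picks f^t depending on the run so far
  (history of parents, lambdas and offspring) and the current x^t, lambda^t.\<close>
definition dyn_monotone :: "nat \<Rightarrow> adversary \<Rightarrow> bool" where
  "dyn_monotone n adv \<longleftrightarrow> (\<forall>h x l. strictly_monotone n (adv h x l))"

definition zeros :: "bool list \<Rightarrow> nat" where
  "zeros x = length (filter Not x)"

primrec mutate :: "real \<Rightarrow> bool list \<Rightarrow> bool list pmf" where
  "mutate p [] = return_pmf []"
| "mutate p (b # bs) =
     bind_pmf (bernoulli_pmf p) (\<lambda>fl. bind_pmf (mutate p bs) (\<lambda>rest. return_pmf ((b \<noteq> fl) # rest)))"

primrec offspring :: "real \<Rightarrow> nat \<Rightarrow> bool list \<Rightarrow> bool list list pmf" where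
  "offspring p 0 x = return_pmf []"
| "offspring p (Suc k) x =
     bind_pmf (mutate p x) (\<lambda>y. bind_pmf (offspring p k x) (\<lambda>ys. return_pmf (y # ys)))"

text \<open>Indices of the best offspring (ties broken uniformly among offspring).\<close>
definition best_idx :: "(bool list \<Rightarrow> real) \<Rightarrow> bool list list \<Rightarrow> nat set" where
  "best_idx f ys = {i. i < length ys \<and> (\<forall>j<length ys. f (ys ! j) \<le> f (ys ! i))}"

definition lambda_update :: "real \<Rightarrow> real \<Rightarrow> bool \<Rightarrow> real \<Rightarrow> real" where
  "lambda_update s F success l = (if success then max 1 (l / F) else F powr (1 / s) * l)"

text \<open>\<open>reach n c s F adv K h x l\<close>: distribution of the event "the all-ones string is
  reached within K further generations", started in state (x,l) with history h,
  for the SA-(1,lambda)-EA with success ratio s, update strength F and mutation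
  rate c/n, against adversary adv.\<close>
primrec reach :: "nat \<Rightarrow> real \<Rightarrow> real \<Rightarrow> real \<Rightarrow> adversary \<Rightarrow> nat \<Rightarrow> hist \<Rightarrow> bool list \<Rightarrow> real \<Rightarrow> bool pmf" where
  "reach n c s F adv 0 h x l = return_pmf (x = replicate n True)"
| "reach n c s F adv (Suc K) h x l =
     (if x = replicate n True then return_pmf True
      else bind_pmf (offspring (c / real n) (nat (round l)) x) (\<lambda>ys.
             bind_pmf (pmf_of_set (best_idx (adv h x l) ys)) (\<lambda>i.
               reach n c s F adv K (h @ [(x, l, ys)]) (ys ! i)
                 (lambda_update s F (adv h x l (ys ! i) > adv h x l x) l))))"

definition prob_T_le :: "nat \<Rightarrow> real \<Rightarrow> real \<Rightarrow> real \<Rightarrow> adversary \<Rightarrow> bool list \<Rightarrow> nat \<Rightarrow> real" where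
  "prob_T_le n c s F adv x0 K = measure_pmf.prob (reach n c s F adv K [] x0 1) {True}"

end

theory Submission
  imports Defs
begin

(* The proof is a drift analysis of the potential
     Phi(x, lambda) = exp (eta (eps n / 2 - Z(x)) + kappa lambda).
   As long as Z > eps n / 2, one generation raises the expected potential by at most
   beta = O(exp (-eta n / 6)).  With a single offspring (lambda < 3/2), a mutation of a point with
   few zeros creates more zeros than it removes, and for large s the growth F^(1/s) of lambda after
   a failure is negligible.  With k >= 2 offspring, a success divides lambda by F, which outweighs the
   moderate zero gain of the best of k ~ lambda mutants; a failure requires that no mutant improves the
   parent, and the probability q0 of an improving mutant keeps this event from paying for the growth
   of lambda.  Since Phi >= 1 whenever Z <= eps n / 2, in particular at the optimum, the optimum is
   reached within K generations with probability at most Phi(x0, 1) + K beta, which is exponentially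
   small even for K = exp (eta n / 12). *)

section \<open>Products of bitwise weights\<close>

lemma prod_list_ge_1:
  fixes xs :: "real list"
  assumes "\<And>v. v \<in> set xs \<Longrightarrow> 1 \<le> v"
  shows "1 \<le> prod_list xs"
  using assms
proof (induction xs)
  case (Cons v xs)
  then have "1 * 1 \<le> v * prod_list xs" by (intro mult_mono) (auto intro: order_trans[OF zero_le_one])
  then show ?case by simp
qed simp

lemma member_le_prod_list:
  fixes \<phi> :: "'a \<Rightarrow> real"
  assumes "y \<in> set ys" and "\<And>v. v \<in> set ys \<Longrightarrow> 1 \<le> \<phi> v"
  shows "\<phi> y \<le> prod_list (map \<phi> ys)"
  using assms
proof (induction ys)
  case (Cons v vs)
  have rest: "1 \<le> prod_list (map \<phi> vs)" using Cons.prems by (intro prod_list_ge_1) auto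
  show ?case
  proof (cases "y = v")
    case True
    then have "\<phi> y * 1 \<le> \<phi> v * prod_list (map \<phi> vs)"
      using rest Cons.prems by (intro mult_mono) (auto intro: order_trans[OF zero_le_one])
    then show ?thesis by simp
  next
    case False
    then have "1 * \<phi> y \<le> \<phi> v * prod_list (map \<phi> vs)"
      using Cons by (intro mult_mono) (auto intro: order_trans[OF zero_le_one])
    then show ?thesis by simp
  qed
qed simp

definition bitwise_prod :: "(bool \<Rightarrow> bool \<Rightarrow> real) \<Rightarrow> bool list \<Rightarrow> bool list \<Rightarrow> real" where
  "bitwise_prod w x y = prod_list (map (\<lambda>(a, b). w a b) (zip x y))"

lemma bitwise_prod_Nil [simp]: "bitwise_prod w [] y = 1"
  by (simp add: bitwise_prod_def)

lemma bitwise_prod_Cons [simp]: "bitwise_prod w (a # x) (b # y) = w a b * bitwise_prod w x y"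
  by (simp add: bitwise_prod_def)

lemma bitwise_prod_nonneg: "(\<And>a b. 0 \<le> w a b) \<Longrightarrow> 0 \<le> bitwise_prod w x y"
  unfolding bitwise_prod_def by (rule prod_list_nonneg) auto

lemma bitwise_prod_ge_1: "(\<And>a b. 1 \<le> w a b) \<Longrightarrow> 1 \<le> bitwise_prod w x y"
  unfolding bitwise_prod_def by (rule prod_list_ge_1) auto

lemma bitwise_prod_le:
  assumes "length y = length x" and "\<And>a b. 0 \<le> f a b" and "\<And>a b. f a b \<le> g a * h a b"
    and "\<And>a b. 0 \<le> h a b"
  shows "bitwise_prod f x y \<le> prod_list (map g x) * bitwise_prod h x y"
  using assms(1)
proof (induction x arbitrary: y)
  case (Cons a x)
  then obtain b y' where y: "y = b # y'" by (cases y) auto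
  have "bitwise_prod f (a # x) y = f a b * bitwise_prod f x y'" by (simp add: y)
  also have "\<dots> \<le> (g a * h a b) * (prod_list (map g x) * bitwise_prod h x y')"
    using Cons y assms by (intro mult_mono bitwise_prod_nonneg) (auto intro: order_trans[OF assms(2) assms(3)])
  finally show ?case by (simp add: y algebra_simps)
qed simp

lemma bitwise_prod_of_bool:
  "length y = length x \<Longrightarrow> bitwise_prod (\<lambda>a b. of_bool (R a b)) x y = of_bool (list_all2 R x y)"
proof (induction x arbitrary: y)
  case (Cons a x)
  then obtain b y' where "y = b # y'" by (cases y) auto
  with Cons show ?case by auto
qed simp

lemma set_pmf_mutate_length: "y \<in> set_pmf (mutate p x) \<Longrightarrow> length y = length x"
  by (induction x arbitrary: y) auto

lemma set_pmf_offspringD: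
  "ys \<in> set_pmf (offspring p k x) \<Longrightarrow> length ys = k \<and> (\<forall>y\<in>set ys. y \<in> set_pmf (mutate p x))"
  by (induction k arbitrary: ys) auto

lemma nn_integral_mutate_bitwise_prod:
  assumes p: "0 \<le> p" "p \<le> 1" and w: "\<And>a b. 0 \<le> w a b"
  shows "(\<integral>\<^sup>+y. ennreal (bitwise_prod w x y) \<partial>mutate p x)
           = ennreal (prod_list (map (\<lambda>a. (1 - p) * w a a + p * w a (\<not> a)) x))"
proof (induction x)
  case (Cons b bs)
  define P where "P = prod_list (map (\<lambda>a. (1 - p) * w a a + p * w a (\<not> a)) bs)"
  have P0: "0 \<le> P"
    unfolding P_def using p w by (intro prod_list_nonneg) (auto intro!: add_nonneg_nonneg mult_nonneg_nonneg)
  have "(\<integral>\<^sup>+y. ennreal (bitwise_prod w (b # bs) y) \<partial>mutate p (b # bs))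
      = (\<integral>\<^sup>+fl. ennreal (w b (b \<noteq> fl)) * (\<integral>\<^sup>+rest. ennreal (bitwise_prod w bs rest) \<partial>mutate p bs) \<partial>bernoulli_pmf p)"
    by (simp add: ennreal_mult' bitwise_prod_nonneg w nn_integral_cmult)
  also have "\<dots> = (\<integral>\<^sup>+fl. ennreal (w b (b \<noteq> fl) * P) \<partial>bernoulli_pmf p)"
    by (simp add: Cons ennreal_mult' w P_def)
  also have "\<dots> = ennreal (w b (\<not> b) * P) * ennreal p + ennreal (w b b * P) * ennreal (1 - p)"
    using p w P0 by simp
  also have "\<dots> = ennreal (w b (\<not> b) * P * p + w b b * P * (1 - p))"
    using p w P0 by (subst ennreal_plus) (auto simp: ennreal_mult)
  also have "\<dots> = ennreal (((1 - p) * w b b + p * w b (\<not> b)) * P)"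
    by (simp add: algebra_simps)
  finally show ?case by (simp add: P_def)
qed simp

lemma nn_integral_offspring_prod_list:
  assumes "\<And>y. 0 \<le> \<phi> y"
  shows "(\<integral>\<^sup>+ys. ennreal (prod_list (map \<phi> ys)) \<partial>offspring p k x) = (\<integral>\<^sup>+y. ennreal (\<phi> y) \<partial>mutate p x) ^ k"
proof (induction k)
  case (Suc k)
  have "(\<integral>\<^sup>+ys. ennreal (prod_list (map \<phi> ys)) \<partial>offspring p (Suc k) x)
     = (\<integral>\<^sup>+y. ennreal (\<phi> y) * (\<integral>\<^sup>+ys. ennreal (prod_list (map \<phi> ys)) \<partial>offspring p k x) \<partial>mutate p x)"
    by (simp add: ennreal_mult' assms prod_list_nonneg nn_integral_cmult)
  then show ?case by (simp add: Suc nn_integral_multc)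
qed simp

lemma nn_integral_offspring_cmult_prod_list:
  assumes "0 \<le> C" and "\<And>y. 0 \<le> \<phi> y" and "(\<integral>\<^sup>+y. ennreal (\<phi> y) \<partial>mutate p x) = ennreal a" and "0 \<le> a"
  shows "(\<integral>\<^sup>+ys. ennreal (C * prod_list (map \<phi> ys)) \<partial>offspring p k x) = ennreal (C * a ^ k)"
  using assms
  by (simp add: ennreal_mult' prod_list_nonneg nn_integral_cmult nn_integral_offspring_prod_list ennreal_power)

lemma nn_integral_offspring_sum_prod_lists:
  assumes C: "0 \<le> C1" "0 \<le> C2" and nonneg: "\<And>y. 0 \<le> \<phi> y" "\<And>y. 0 \<le> \<psi> y"
    and "(\<integral>\<^sup>+y. ennreal (\<phi> y) \<partial>mutate p x) = ennreal a" "0 \<le> a"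
    and "(\<integral>\<^sup>+y. ennreal (\<psi> y) \<partial>mutate p x) = ennreal b" "0 \<le> b"
  shows "(\<integral>\<^sup>+ys. ennreal (C1 * prod_list (map \<phi> ys) + C2 * prod_list (map \<psi> ys)) \<partial>offspring p k x)
           = ennreal (C1 * a ^ k + C2 * b ^ k)"
proof -
  have "(\<integral>\<^sup>+ys. ennreal (C1 * prod_list (map \<phi> ys) + C2 * prod_list (map \<psi> ys)) \<partial>offspring p k x)
      = (\<integral>\<^sup>+ys. ennreal (C1 * prod_list (map \<phi> ys)) + ennreal (C2 * prod_list (map \<psi> ys)) \<partial>offspring p k x)"
    using C nonneg by (intro nn_integral_cong ennreal_plus mult_nonneg_nonneg prod_list_nonneg) auto
  also have "\<dots> = ennreal (C1 * a ^ k) + ennreal (C2 * b ^ k)"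
    using assms by (simp add: nn_integral_add nn_integral_offspring_cmult_prod_list)
  also have "\<dots> = ennreal (C1 * a ^ k + C2 * b ^ k)"
    using assms by (simp flip: ennreal_plus)
  finally show ?thesis .
qed

lemma zeros_Nil [simp]: "zeros [] = 0"
  and zeros_Cons [simp]: "zeros (b # y) = (if b then 0 else 1) + zeros y"
  by (auto simp: zeros_def)

lemma zeros_le_length: "zeros x \<le> length x"
  by (simp add: zeros_def)

lemma prod_list_map_bool:
  "prod_list (map (g :: bool \<Rightarrow> real) x) = g False ^ zeros x * g True ^ (length x - zeros x)"
proof (induction x)
  case (Cons b x)
  with zeros_le_length[of x] show ?case by (cases b) (auto simp: Suc_diff_le algebra_simps)
qed simp

lemma best_idx_nonempty_finite:
  assumes "ys \<noteq> []"
  shows "best_idx f ys \<noteq> {}" "finite (best_idx f ys)"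
proof -
  have "Max (f ` set ys) \<in> f ` set ys" using assms by (intro Max_in) auto
  then obtain i where i: "i < length ys" "f (ys ! i) = Max (f ` set ys)" by (auto simp: in_set_conv_nth)
  then have "\<forall>j<length ys. f (ys ! j) \<le> f (ys ! i)" by (auto intro!: Max_ge)
  with i show "best_idx f ys \<noteq> {}" by (auto simp: best_idx_def)
  show "finite (best_idx f ys)" by (rule finite_subset[of _ "{..<length ys}"]) (auto simp: best_idx_def)
qed

lemma nn_integral_nested_mono:
  assumes "\<And>ys i. ys \<in> set_pmf M \<Longrightarrow> i \<in> set_pmf (N ys) \<Longrightarrow> g ys i \<le> h ys i"
  shows "(\<integral>\<^sup>+ys. \<integral>\<^sup>+i. g ys i \<partial>N ys \<partial>M) \<le> (\<integral>\<^sup>+ys. \<integral>\<^sup>+i. h ys i \<partial>N ys \<partial>M)"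
  using assms by (intro nn_integral_mono_AE) (auto simp: AE_measure_pmf_iff intro!: nn_integral_mono_AE)

lemma nn_integral_nested_pmf_of_set_le:
  assumes "\<And>ys. ys \<in> set_pmf M \<Longrightarrow> S ys \<noteq> {} \<and> finite (S ys)"
    and "\<And>ys i. ys \<in> set_pmf M \<Longrightarrow> i \<in> S ys \<Longrightarrow> g ys i \<le> B ys"
  shows "(\<integral>\<^sup>+ys. \<integral>\<^sup>+i. ennreal (g ys i) \<partial>pmf_of_set (S ys) \<partial>M) \<le> (\<integral>\<^sup>+ys. ennreal (B ys) \<partial>M)"
proof -
  have "(\<integral>\<^sup>+ys. \<integral>\<^sup>+i. ennreal (g ys i) \<partial>pmf_of_set (S ys) \<partial>M)
        \<le> (\<integral>\<^sup>+ys. \<integral>\<^sup>+i. ennreal (B ys) \<partial>pmf_of_set (S ys) \<partial>M)"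
    using assms by (intro nn_integral_nested_mono) (auto intro: ennreal_leI)
  then show ?thesis by (simp add: measure_pmf.emeasure_space_1)
qed

lemma nn_integral_nested_add_const:
  "(\<integral>\<^sup>+ys. \<integral>\<^sup>+i. (g ys i + C) \<partial>measure_pmf (N ys) \<partial>measure_pmf M) = (\<integral>\<^sup>+ys. \<integral>\<^sup>+i. g ys i \<partial>N ys \<partial>M) + C"
  by (simp add: nn_integral_add measure_pmf.emeasure_space_1)

lemma nat_round_bounds:
  assumes "1 \<le> l"
  shows "real (nat (round l)) \<le> l + 1/2" "l - 1/2 < real (nat (round l))" "1 \<le> nat (round l)"
proof -
  have a: "of_int (round l) \<le> l + 1/2" "l - 1/2 < of_int (round l)"
    using of_int_round_le[of l] of_int_round_gt[of l] by auto
  have "0 < round l" using a assms by linarith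
  with a show "real (nat (round l)) \<le> l + 1/2" "l - 1/2 < real (nat (round l))" "1 \<le> nat (round l)"
    by auto
qed

definition improves :: "bool list \<Rightarrow> bool list \<Rightarrow> bool" where
  "improves x y \<longleftrightarrow> y \<noteq> x \<and> (\<forall>i<length x. x ! i \<le> y ! i)"

lemma strictly_monotone_improves:
  "strictly_monotone n f \<Longrightarrow> length x = n \<Longrightarrow> length y = n \<Longrightarrow> improves x y \<Longrightarrow> f x < f y"
  by (auto simp: strictly_monotone_def improves_def)

lemma best_idx_not_improves:
  assumes f: "strictly_monotone n f" and x: "length x = n" and ys: "\<forall>y\<in>set ys. length y = n"
    and i: "i \<in> best_idx f ys" and fail: "\<not> f x < f (ys ! i)" and w: "w \<in> set ys"
  shows "\<not> improves x w"
proof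
  assume "improves x w"
  then have "f x < f w" using f x ys w by (intro strictly_monotone_improves) auto
  moreover obtain j where "j < length ys" "w = ys ! j" using w by (auto simp: in_set_conv_nth)
  ultimately show False using i fail by (auto simp: best_idx_def intro: less_le_trans)
qed

lemma power_le_exp_mult: "0 \<le> A \<Longrightarrow> A \<le> exp a \<Longrightarrow> A ^ k \<le> exp (a * real k)"
  by (metis exp_of_nat2_mult mult.commute power_mono)

lemma exp_minus_le_quadratic:
  fixes x :: real
  assumes "0 \<le> x"
  shows "exp (-x) \<le> 1 - x + x\<^sup>2"
proof -
  have "exp (-x) * (1 + x) \<le> exp (-x) * exp x"
    using exp_ge_add_one_self[of x] by (intro mult_left_mono) auto
  then have "exp (-x) * (1 + x) \<le> 1" by (simp add: mult_exp_exp)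
  moreover have "(1 - x + x\<^sup>2) * (1 + x) = 1 + x ^ 3"
    by (simp add: algebra_simps power2_eq_square power3_eq_cube)
  moreover have "0 \<le> x ^ 3" using assms by simp
  ultimately have "exp (-x) * (1 + x) \<le> (1 - x + x\<^sup>2) * (1 + x)" by linarith
  then show ?thesis using assms by (simp add: mult_le_cancel_right)
qed

lemma exp_minus_double_le_one_minus:
  fixes p :: real
  assumes "0 \<le> p" "p \<le> 1/2"
  shows "exp (-2 * p) \<le> 1 - p"
proof -
  have "exp (-2 * p) * (1 + 2 * p) \<le> exp (-2 * p) * exp (2 * p)"
    using exp_ge_add_one_self[of "2 * p"] by (intro mult_left_mono) auto
  then have "exp (-2 * p) * (1 + 2 * p) \<le> 1" by (simp add: mult_exp_exp)
  moreover have "p * (2 * p) \<le> p * 1" using assms by (intro mult_left_mono) auto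
  then have "1 \<le> (1 - p) * (1 + 2 * p)" by (simp add: algebra_simps)
  ultimately have "exp (-2 * p) * (1 + 2 * p) \<le> (1 - p) * (1 + 2 * p)" by linarith
  then show ?thesis using assms by (simp add: mult_le_cancel_right)
qed

lemma nat_floor_exp_div_ln_sq_le:
  fixes \<delta> :: real and n :: nat
  assumes n: "3 \<le> n" and \<delta>: "0 \<le> \<delta>"
  shows "real (nat \<lfloor>exp (\<delta> * real n / (ln (real n))\<^sup>2)\<rfloor>) \<le> exp (\<delta> * real n)"
proof -
  have "exp 1 \<le> real n" using exp_le n by linarith
  then have "1 \<le> ln (real n)" using ln_ge_iff[of "real n" 1] n by simp
  then have "1 \<le> (ln (real n))\<^sup>2" by (simp add: one_le_power)
  then have "\<delta> * real n / (ln (real n))\<^sup>2 \<le> \<delta> * real n / 1" using \<delta> by (intro divide_left_mono) auto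
  then have "exp (\<delta> * real n / (ln (real n))\<^sup>2) \<le> exp (\<delta> * real n)" by simp
  moreover have "real (nat \<lfloor>exp (\<delta> * real n / (ln (real n))\<^sup>2)\<rfloor>) \<le> exp (\<delta> * real n / (ln (real n))\<^sup>2)"
    by (simp add: of_nat_nat)
  ultimately show ?thesis by linarith
qed

text \<open>A success divides \<open>\<lambda>\<close> by \<open>F\<close>; the weight \<open>\<kappa> \<mu>\<close> of that drop beats the growth factor \<open>A \<le> 1 + q0/2\<close>
  of the zero weight over the \<open>k \<approx> \<lambda>\<close> offspring.\<close>

lemma success_term_le:
  fixes l F \<kappa> \<mu> q0 m A :: real and k :: nat
  assumes l: "3/2 \<le> l" and k: "real k \<le> l + 1/2" and q0: "0 < q0" and F: "1 < F"
    and mu: "\<mu> = min (1/3) (1 - 1/F)" and m: "m = - ln (1 - exp (-q0/6))"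
    and kap: "\<kappa> * \<mu> = q0 + m" "0 < \<kappa>" and A: "0 \<le> A" "A \<le> 1 + q0/2"
  shows "exp (\<kappa> * (max 1 (l/F) - l)) * A ^ k \<le> 1 - exp (-q0/6)"
proof -
  have e6: "0 < exp (-q0/6)" "exp (-q0/6) < 1" using q0 by auto
  have em: "exp (-m) = 1 - exp (-q0/6)" and m0: "0 < m" using e6 by (simp_all add: m)
  have "\<mu> \<le> 1/3" "\<mu> \<le> 1 - 1/F" unfolding mu by (rule min.cobounded1, rule min.cobounded2)
  have drop: "max 1 (l/F) - l \<le> - \<mu> * l"
  proof (cases "1 \<le> l/F")
    case True
    have "\<mu> * l \<le> (1 - 1/F) * l" using \<open>\<mu> \<le> 1 - 1/F\<close> l by (intro mult_right_mono) auto
    with True show ?thesis by (simp add: algebra_simps)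
  next
    case False
    have "\<mu> * l \<le> (1/3) * l" using \<open>\<mu> \<le> 1/3\<close> l by (intro mult_right_mono) auto
    moreover have "max 1 (l/F) = 1" using False by simp
    ultimately show ?thesis using l by linarith
  qed
  have "A \<le> exp (q0/2)" using A(2) exp_ge_add_one_self[of "q0/2"] by linarith
  then have "A ^ k \<le> exp (q0/2 * real k)" using A(1) by (rule power_le_exp_mult[rotated])
  also have "\<dots> \<le> exp (q0 * l)"
    using k q0 l mult_left_mono[OF k, of "q0/2"] mult_left_mono[OF l, of q0] by (simp add: algebra_simps)
  finally have Ak: "A ^ k \<le> exp (q0 * l)" .
  have "\<kappa> * (max 1 (l/F) - l) \<le> -\<kappa> * \<mu> * l" using mult_left_mono[OF drop, of \<kappa>] kap(2) by (simp add: algebra_simps)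
  then have "exp (\<kappa> * (max 1 (l/F) - l)) * A ^ k \<le> exp (-\<kappa> * \<mu> * l) * exp (q0 * l)"
    using Ak A by (intro mult_mono) auto
  also have "\<dots> = exp (- m * l)" by (simp add: kap mult_exp_exp algebra_simps)
  also have "\<dots> \<le> exp (-m)" using mult_left_mono[of 1 l m] m0 l by simp
  finally show ?thesis using em by simp
qed

lemma failure_term_le:
  fixes l Fs \<kappa> q0 B :: real and k :: nat
  assumes l: "3/2 \<le> l" and k: "l - 1/2 \<le> real k" and q0: "0 < q0"
    and B: "0 \<le> B" "B \<le> 1 - q0/2" and Fs: "\<kappa> * (Fs - 1) \<le> q0/6"
  shows "exp (\<kappa> * (Fs - 1) * l) * B ^ k \<le> exp (-q0/6)"
proof -
  have "B \<le> exp (-q0/2)" using B(2) exp_ge_add_one_self[of "-q0/2"] by linarith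
  then have "B ^ k \<le> exp (-q0/2 * real k)" using B(1) by (rule power_le_exp_mult[rotated])
  also have "\<dots> \<le> exp (-q0/2 * (l - 1/2))" using mult_left_mono[OF k, of "q0/2"] q0 by simp
  finally have Bk: "B ^ k \<le> exp (-q0/2 * (l - 1/2))" .
  have "\<kappa> * (Fs - 1) * l \<le> q0/6 * l" using Fs l by (intro mult_right_mono) auto
  then have "exp (\<kappa> * (Fs - 1) * l) * B ^ k \<le> exp (q0/6 * l) * exp (-q0/2 * (l - 1/2))"
    using Bk B by (intro mult_mono) auto
  also have "\<dots> = exp (q0/4 - q0 * l / 3)" by (simp add: mult_exp_exp algebra_simps)
  also have "\<dots> \<le> exp (-q0/6)"
  proof -
    have "q0 * (3/2) \<le> q0 * l" using l q0 by (intro mult_left_mono) auto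
    then have "q0/4 - q0 * l / 3 \<le> -q0/6" using q0 by linarith
    then show ?thesis by simp
  qed
  finally show ?thesis .
qed

lemma zero_weight_exponent_le:
  fixes n z :: nat and p c \<eta> \<tau> a b :: real
  assumes z: "3 * z \<le> n" and pn: "p * real n = c" and p: "0 \<le> p" and c: "0 < c"
    and eta: "0 < \<eta>" "\<eta> \<le> 1/6" and tau: "\<tau> \<le> c * \<eta> / 6"
    and a: "a \<le> \<eta> + \<eta>\<^sup>2" and b: "\<eta> - \<eta>\<^sup>2 \<le> b"
  shows "p * a * real z - p * b * real (n - z) + \<tau> \<le> 0"
proof -
  have "p * a * real z \<le> p * (\<eta> + \<eta>\<^sup>2) * real z" using a p by (intro mult_right_mono mult_left_mono) auto
  moreover have "p * (\<eta> - \<eta>\<^sup>2) * real (n - z) \<le> p * b * real (n - z)"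
    using b p by (intro mult_right_mono mult_left_mono) auto
  moreover have "p * (3 * real z) \<le> p * real n" using z p by (intro mult_left_mono) auto
  then have pz: "p * real z \<le> c / 3" using pn by simp
  moreover have "\<eta> * \<eta> \<le> \<eta> * (1/6)" using eta by (intro mult_left_mono) auto
  then have eta2: "\<eta>\<^sup>2 \<le> \<eta> / 6" by (simp add: power2_eq_square)
  moreover have "p * (\<eta> + \<eta>\<^sup>2) * real z - p * (\<eta> - \<eta>\<^sup>2) * real (n - z)
      = 2 * \<eta> * (p * real z) - \<eta> * (p * real n) + \<eta>\<^sup>2 * (p * real n)"
    using z by (simp add: of_nat_diff algebra_simps power2_eq_square)
  moreover have "2 * \<eta> * (p * real z) \<le> 2 * \<eta> * (c/3)" using eta pz by (intro mult_left_mono) auto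
  moreover have "\<eta>\<^sup>2 * c \<le> \<eta> / 6 * c" using eta2 c by (intro mult_right_mono) auto
  ultimately show ?thesis using tau pn by (simp add: algebra_simps)
qed

text \<open>With few zeros, a mutation creates more zeros than it removes, on average: the
  expected zero weight \<open>exp (-\<eta> Z')\<close> contracts by enough to absorb a factor \<open>exp \<tau>\<close>.\<close>

lemma zero_weight_contraction:
  fixes n z :: nat and p c \<eta> \<tau> :: real
  assumes n: "0 < n" and z: "3 * z \<le> n" and p: "p = c / real n" and c: "0 < c" "c \<le> 1"
    and eta: "0 < \<eta>" "\<eta> \<le> 1/6" and tau: "\<tau> \<le> c * \<eta> / 6"
  shows "((1 - p) * exp (-\<eta>) + p) ^ z * ((1 - p) + p * exp (-\<eta>)) ^ (n - z) * exp \<tau> \<le> exp (-\<eta> * real z)"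
proof -
  define a where "a = exp \<eta> - 1"
  define b where "b = 1 - exp (-\<eta>)"
  have pn: "p * real n = c" using n p by simp
  have p0: "0 \<le> p" "p \<le> 1" using p c n by (auto simp: divide_le_eq)
  have "(1 - p) * exp (-\<eta>) + p = exp (-\<eta>) * (1 + p * a)"
    by (simp add: a_def algebra_simps exp_minus_inverse)
  also have "\<dots> \<le> exp (-\<eta> + p * a)"
    unfolding exp_add using exp_ge_add_one_self[of "p * a"] by (intro mult_left_mono) auto
  finally have "((1 - p) * exp (-\<eta>) + p) ^ z \<le> exp ((-\<eta> + p * a) * real z)"
    using p0 by (intro power_le_exp_mult) auto
  moreover have "(1 - p) + p * exp (-\<eta>) \<le> exp (- (p * b))"
    using exp_ge_add_one_self[of "- (p * b)"] by (simp add: b_def algebra_simps)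
  then have "((1 - p) + p * exp (-\<eta>)) ^ (n - z) \<le> exp (- (p * b) * real (n - z))"
    using p0 by (intro power_le_exp_mult) auto
  ultimately have "((1 - p) * exp (-\<eta>) + p) ^ z * ((1 - p) + p * exp (-\<eta>)) ^ (n - z) * exp \<tau>
      \<le> exp ((-\<eta> + p * a) * real z) * exp (- (p * b) * real (n - z)) * exp \<tau>"
    using p0 by (intro mult_mono mult_nonneg_nonneg zero_le_power) auto
  also have "\<dots> = exp (-\<eta> * real z + (p * a * real z - p * b * real (n - z) + \<tau>))"
    by (simp add: mult_exp_exp algebra_simps)
  also have "\<dots> \<le> exp (-\<eta> * real z)"
  proof -
    have "p * a * real z - p * b * real (n - z) + \<tau> \<le> 0"
      by (rule zero_weight_exponent_le[OF z pn p0(1) c(1) eta tau])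
         (use exp_bound[of \<eta>] exp_minus_le_quadratic[of \<eta>] eta in \<open>auto simp: a_def b_def\<close>)
    then show ?thesis by simp
  qed
  finally show ?thesis .
qed

lemma gain_weight_power_le:
  fixes p c \<eta> q0 :: real and z :: nat
  assumes p: "0 \<le> p" and pz: "p * real z \<le> c" and c: "0 < c" and eta: "0 < \<eta>" "\<eta> \<le> 1"
    and eta_q0: "\<eta> \<le> ln (1 + q0/2) / (2 * c)" and q0: "0 < q0"
  shows "((1 - p) + p * exp \<eta>) ^ z \<le> 1 + q0/2"
proof -
  define a where "a = exp \<eta> - 1"
  have "\<eta> * \<eta> \<le> \<eta> * 1" using eta by (intro mult_left_mono) auto
  with exp_bound[of \<eta>] eta have a2: "a \<le> 2 * \<eta>" unfolding a_def power2_eq_square by linarith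
  have a0: "0 \<le> a" using eta by (simp add: a_def)
  have "((1 - p) + p * exp \<eta>) ^ z = (1 + p * a) ^ z" by (simp add: a_def algebra_simps)
  also have "\<dots> \<le> exp (p * a * real z)"
    using p a0 by (intro power_le_exp_mult) (simp_all add: exp_ge_add_one_self)
  also have "\<dots> \<le> exp (2 * c * \<eta>)"
  proof -
    have "p * a * real z = a * (p * real z)" by simp
    also have "\<dots> \<le> a * c" using pz a0 by (intro mult_left_mono) auto
    also have "\<dots> \<le> (2 * \<eta>) * c" using a2 c by (intro mult_right_mono) auto
    finally show ?thesis by (simp add: algebra_simps)
  qed
  also have "\<dots> \<le> exp (ln (1 + q0/2))"
    using mult_left_mono[OF eta_q0, of "2 * c"] c by simp
  also have "\<dots> = 1 + q0/2" using q0 by simp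
  finally show ?thesis .
qed

text \<open>\<open>(1 - p)^(n - z) (1 - (1 - p)^z)\<close> is the probability that a mutant flips only zero bits, and at least one.\<close>

lemma improvement_prob_ge:
  fixes p c \<epsilon> :: real and z n :: nat
  assumes n: "2 \<le> n" and p: "p = c / real n" and c: "0 < c" "c \<le> 1" and z: "z \<le> n"
    and zz: "\<epsilon> * real n / 2 < real z" and e: "0 < \<epsilon>"
  shows "exp (-2 * c) * (1 - exp (-c * \<epsilon> / 2)) \<le> (1 - p) ^ (n - z) * (1 - (1 - p) ^ z)"
proof -
  have pn: "p * real n = c" using n p by simp
  have p0: "0 \<le> p" using p c by simp
  have "p * 2 \<le> p * real n" using n p0 by (intro mult_left_mono) auto
  then have p2: "p \<le> 1/2" using pn c by linarith
  have "exp (-2 * c) = exp (-2 * p) ^ n" using pn by (simp add: exp_of_nat2_mult[symmetric] algebra_simps)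
  also have "\<dots> \<le> (1 - p) ^ n" using exp_minus_double_le_one_minus[OF p0 p2] by (intro power_mono) auto
  also have "\<dots> \<le> (1 - p) ^ (n - z)" using p0 p2 z by (intro power_decreasing) auto
  finally have h1: "exp (-2 * c) \<le> (1 - p) ^ (n - z)" .
  have "(1 - p) ^ z \<le> exp (-p) ^ z" using p0 p2 exp_ge_add_one_self[of "-p"] by (intro power_mono) auto
  also have "\<dots> = exp (- (p * real z))" by (simp add: exp_of_nat2_mult[symmetric] algebra_simps)
  also have "\<dots> \<le> exp (-c * \<epsilon> / 2)"
    using mult_left_mono[of "\<epsilon> * real n / 2" "real z" p] zz p0 pn by (simp add: algebra_simps)
  finally have h2: "(1 - p) ^ z \<le> exp (-c * \<epsilon> / 2)" .
  show ?thesis using h1 h2 p0 p2 c e by (intro mult_mono) auto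
qed

section \<open>Weights of zero counts\<close>

definition zero_weight :: "real \<Rightarrow> bool \<Rightarrow> bool \<Rightarrow> real" where
  "zero_weight \<eta> a b = (if b then 1 else exp (-\<eta>))"

definition gain_weight :: "real \<Rightarrow> bool \<Rightarrow> bool \<Rightarrow> real" where
  "gain_weight \<eta> a b = (if \<not> a \<and> b then exp \<eta> else 1)"

lemma bitwise_prod_zero_weight:
  "length y = length x \<Longrightarrow> bitwise_prod (zero_weight \<eta>) x y = exp (-\<eta> * real (zeros y))"
proof (induction x arbitrary: y)
  case (Cons a x)
  then obtain b y' where "y = b # y'" by (cases y) auto
  with Cons show ?case by (auto simp: zero_weight_def algebra_simps mult_exp_exp)
qed simp

lemma bitwise_prod_gain_weight_ge_1: "0 \<le> \<eta> \<Longrightarrow> 1 \<le> bitwise_prod (gain_weight \<eta>) x y"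
  by (rule bitwise_prod_ge_1) (auto simp: gain_weight_def)

text \<open>Only bits flipped from zero to one can lower the zero count of a mutant below that of its parent.\<close>

lemma bitwise_prod_zero_weight_le:
  assumes "length y = length x" "0 \<le> \<eta>"
  shows "bitwise_prod (zero_weight \<eta>) x y \<le> exp (-\<eta> * real (zeros x)) * bitwise_prod (gain_weight \<eta>) x y"
proof -
  have "bitwise_prod (zero_weight \<eta>) x y \<le> prod_list (map (\<lambda>a. zero_weight \<eta> a a) x) * bitwise_prod (gain_weight \<eta>) x y"
    using assms by (intro bitwise_prod_le) (auto simp: zero_weight_def gain_weight_def mult_exp_exp)
  also have "prod_list (map (\<lambda>a. zero_weight \<eta> a a) x) = exp (-\<eta> * real (zeros x))"
    by (simp add: prod_list_map_bool zero_weight_def exp_of_nat_mult[symmetric] mult.commute)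
  finally show ?thesis .
qed

lemma exp_zeros_le_prod_gain_weight:
  assumes y: "y \<in> set ys" and ly: "length y = length x" and eta: "0 \<le> \<eta>"
  shows "exp (-\<eta> * real (zeros y)) \<le> exp (-\<eta> * real (zeros x)) * prod_list (map (bitwise_prod (gain_weight \<eta>) x) ys)"
proof -
  have "exp (-\<eta> * real (zeros y)) = bitwise_prod (zero_weight \<eta>) x y" using bitwise_prod_zero_weight[OF ly] by simp
  also have "\<dots> \<le> exp (-\<eta> * real (zeros x)) * bitwise_prod (gain_weight \<eta>) x y"
    using bitwise_prod_zero_weight_le[OF ly eta] .
  also have "\<dots> \<le> exp (-\<eta> * real (zeros x)) * prod_list (map (bitwise_prod (gain_weight \<eta>) x) ys)"
    using member_le_prod_list[OF y] bitwise_prod_gain_weight_ge_1[OF eta] by (intro mult_left_mono) auto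
  finally show ?thesis .
qed

lemma not_improves_gain_weight_le:
  assumes "length y = length x" "0 \<le> \<eta>"
  shows "of_bool (\<not> improves x y) * bitwise_prod (gain_weight \<eta>) x y + bitwise_prod (\<lambda>a b. of_bool (a \<le> b)) x y
         \<le> bitwise_prod (gain_weight \<eta>) x y + bitwise_prod (\<lambda>a b. of_bool (a = b)) x y"
proof -
  have "1 \<le> bitwise_prod (gain_weight \<eta>) x y" using assms(2) by (rule bitwise_prod_gain_weight_ge_1)
  then show ?thesis
    using assms(1)
    by (auto simp: bitwise_prod_of_bool list_all2_conv_all_nth improves_def list_eq_iff_nth_eq)
qed

lemma nn_integral_gain_weight:
  assumes "0 \<le> p" "p \<le> 1"
  shows "(\<integral>\<^sup>+y. ennreal (bitwise_prod (gain_weight \<eta>) x y) \<partial>mutate p x) = ennreal ((1 - p + p * exp \<eta>) ^ zeros x)"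
  using assms by (subst nn_integral_mutate_bitwise_prod) (simp_all add: prod_list_map_bool gain_weight_def)

text \<open>A mutant that improves \<open>x\<close> flips only zero bits, at least one; discounting these mutants
  lowers the expected gain weight by at least the probability of this event.\<close>

lemma nn_integral_not_improves_gain_weight_le:
  assumes p: "0 \<le> p" "p \<le> 1" and eta: "0 \<le> \<eta>"
  shows "(\<integral>\<^sup>+y. ennreal (of_bool (\<not> improves x y) * bitwise_prod (gain_weight \<eta>) x y) \<partial>mutate p x)
           + ennreal ((1 - p) ^ (length x - zeros x) * (1 - (1 - p) ^ zeros x))
         \<le> ennreal ((1 - p + p * exp \<eta>) ^ zeros x)"
proof -
  let ?Y = "bitwise_prod (gain_weight \<eta>) x"
  let ?N = "\<lambda>y. of_bool (\<not> improves x y) * ?Y y"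
  let ?le = "bitwise_prod (\<lambda>a b. of_bool (a \<le> b)) x"
  let ?eq = "bitwise_prod (\<lambda>a b. of_bool (a = b)) x"
  define Eq where "Eq = (1 - p) ^ zeros x * (1 - p) ^ (length x - zeros x)"
  define D where "D = (1 - p) ^ (length x - zeros x) * (1 - (1 - p) ^ zeros x)"
  have Eq0: "0 \<le> Eq" and D0: "0 \<le> D" using p by (auto simp: Eq_def D_def power_le_one)
  have Y1: "1 \<le> ?Y y" for y using eta by (rule bitwise_prod_gain_weight_ge_1)
  have "(\<integral>\<^sup>+y. ?N y \<partial>mutate p x) + ennreal D + ennreal Eq = (\<integral>\<^sup>+y. ?N y \<partial>mutate p x) + ennreal (D + Eq)"
    using D0 Eq0 by (simp add: add.assoc)
  also have "\<dots> = (\<integral>\<^sup>+y. ennreal (?N y) + ennreal (?le y) \<partial>mutate p x)"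
    using p by (simp add: nn_integral_add bitwise_prod_nonneg nn_integral_mutate_bitwise_prod
        prod_list_map_bool D_def Eq_def algebra_simps)
  also have "\<dots> \<le> (\<integral>\<^sup>+y. ennreal (?Y y) + ennreal (?eq y) \<partial>mutate p x)"
  proof (rule nn_integral_mono_AE, unfold AE_measure_pmf_iff, intro ballI)
    fix y assume "y \<in> set_pmf (mutate p x)"
    then have "?N y + ?le y \<le> ?Y y + ?eq y"
      using eta by (intro not_improves_gain_weight_le set_pmf_mutate_length)
    then show "ennreal (?N y) + ennreal (?le y) \<le> ennreal (?Y y) + ennreal (?eq y)"
      using Y1[of y] by (simp add: bitwise_prod_nonneg ennreal_plus[symmetric] del: ennreal_plus)
  qed
  also have "\<dots> = ennreal ((1 - p + p * exp \<eta>) ^ zeros x) + ennreal Eq"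
    using p by (simp add: nn_integral_add nn_integral_gain_weight nn_integral_mutate_bitwise_prod
        bitwise_prod_nonneg prod_list_map_bool Eq_def)
  finally show ?thesis by (simp add: D_def ennreal_add_left_cancel_le)
qed

section \<open>The drift of the potential\<close>

text \<open>\<open>q0\<close> bounds from below the probability that a mutant improves a parent with more than
  \<open>\<epsilon> n / 2\<close> zeros (lemma \<open>improvement_prob_ge\<close>).\<close>

locale drift_setting =
  fixes c F s \<epsilon> \<eta> \<kappa> q0 \<mu> m :: real
  assumes c: "0 < c" "c \<le> 1" and F: "1 < F" and s: "0 < s"
    and eps: "0 < \<epsilon>" "\<epsilon> \<le> 1/3"
    and q0: "q0 = exp (-2 * c) * (1 - exp (-c * \<epsilon> / 2))"
    and eta: "0 < \<eta>" "\<eta> \<le> 1/6" "\<eta> \<le> ln (1 + q0/2) / (2 * c)"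
    and mu: "\<mu> = min (1/3) (1 - 1/F)" and m: "m = - ln (1 - exp (-q0/6))"
    and kap: "\<kappa> * \<mu> = q0 + m" "0 < \<kappa>"
    and growth: "\<kappa> * (F powr (1/s) - 1) \<le> q0/6" "\<kappa> * (F powr (1/s) - 1) \<le> c * \<eta> / 9" "F powr (1/s) \<le> 2"
begin

lemma q0_pos: "0 < q0"
proof -
  have "exp (-c * \<epsilon> / 2) < 1" using c(1) eps(1) by simp
  then show ?thesis using q0 by simp
qed

lemma q0_le_1: "q0 \<le> 1"
  unfolding q0 by (rule mult_le_one) (use c eps in auto)

lemma growth_ge_1: "1 \<le> F powr (1/s)"
  using F s by (simp add: ge_one_powr_ge_zero)

lemma lambda_update_bounds:
  assumes "1 \<le> l"
  shows "1 \<le> lambda_update s F b l" "lambda_update s F b l \<le> F powr (1/s) * l"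
proof -
  have "l \<le> F powr (1/s) * l" using growth_ge_1 assms by (simp add: mult_le_cancel_right1)
  moreover have "l / F \<le> l" using F assms by (simp add: divide_le_eq)
  ultimately have "l / F \<le> F powr (1/s) * l" by linarith
  moreover have "1 \<le> F powr (1/s) * l" using growth_ge_1 assms by (metis mult_mono' mult_1 zero_le_one)
  ultimately show "lambda_update s F b l \<le> F powr (1/s) * l" "1 \<le> lambda_update s F b l"
    using \<open>l \<le> F powr (1/s) * l\<close> by (auto simp: lambda_update_def)
qed

lemma mutation_rate_bounds:
  assumes "3 \<le> n" "length x = n"
  shows "0 \<le> c / real n" "c / real n \<le> 1" "c / real n * real (zeros x) \<le> c"
proof -
  show "0 \<le> c / real n" "c / real n \<le> 1" using assms c by (auto simp: divide_le_eq)
  have "c / real n * real (zeros x) \<le> c / real n * real n"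
    using assms c zeros_le_length[of x] by (intro mult_left_mono) auto
  then show "c / real n * real (zeros x) \<le> c" using assms by simp
qed

lemma gain_expectation_le:
  assumes "3 \<le> n" "length x = n"
  shows "(1 - c / real n + c / real n * exp \<eta>) ^ zeros x \<le> 1 + q0/2"
  using mutation_rate_bounds[OF assms] eta
  by (intro gain_weight_power_le[OF _ _ c(1) eta(1) _ eta(3) q0_pos]) auto

definition potential :: "nat \<Rightarrow> bool list \<Rightarrow> real \<Rightarrow> real" where
  "potential n x l = exp (\<eta> * (\<epsilon> * real n / 2 - real (zeros x)) + \<kappa> * l)"

definition drift_error :: "nat \<Rightarrow> real" where
  "drift_error n = 2 * exp (3 * \<kappa>) * exp (- \<eta> * real n / 6)"

lemma potential_ge_1: "1 \<le> l \<Longrightarrow> real (zeros x) \<le> \<epsilon> * real n / 2 \<Longrightarrow> 1 \<le> potential n x l"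
  using eta kap by (simp add: potential_def)

lemma drift_error_nonneg: "0 \<le> drift_error n"
  by (simp add: drift_error_def)

lemma single_offspring_few_zeros:
  fixes n z :: nat and p z2 l :: real
  assumes n: "0 < n" and p: "p = c / real n" and z: "3 * z \<le> n" and l: "1 \<le> l" "l < 3/2"
  shows "exp (\<eta> * z2 + \<kappa> * (F powr (1/s) * l)) * (((1 - p) * exp (-\<eta>) + p) ^ z * ((1 - p) + p * exp (-\<eta>)) ^ (n - z))
         \<le> exp (\<eta> * (z2 - real z) + \<kappa> * l)"
proof -
  define \<tau> where "\<tau> = \<kappa> * (F powr (1/s) - 1) * l"
  have "\<kappa> * (F powr (1/s) - 1) * l \<le> (c * \<eta> / 9) * (3/2)"
    using growth(2) l growth_ge_1 kap c eta by (intro mult_mono) auto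
  then have "\<tau> \<le> c * \<eta> / 6" by (simp add: \<tau>_def algebra_simps)
  then have "((1 - p) * exp (-\<eta>) + p) ^ z * ((1 - p) + p * exp (-\<eta>)) ^ (n - z) * exp \<tau> \<le> exp (-\<eta> * real z)"
    using zero_weight_contraction[OF n z p c eta(1,2)] by blast
  then have "exp (\<eta> * z2 + \<kappa> * l) * (((1 - p) * exp (-\<eta>) + p) ^ z * ((1 - p) + p * exp (-\<eta>)) ^ (n - z) * exp \<tau>)
      \<le> exp (\<eta> * z2 + \<kappa> * l) * exp (-\<eta> * real z)" by (intro mult_left_mono) auto
  moreover have "exp (\<eta> * z2 + \<kappa> * l) * exp (-\<eta> * real z) = exp (\<eta> * (z2 - real z) + \<kappa> * l)"
    by (simp add: algebra_simps flip: exp_add)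
  moreover have "exp (\<eta> * z2 + \<kappa> * (F powr (1/s) * l)) = exp (\<eta> * z2 + \<kappa> * l) * exp \<tau>"
    by (simp add: \<tau>_def algebra_simps flip: exp_add)
  ultimately show ?thesis by (simp only: mult_ac)
qed

lemma single_offspring_many_zeros:
  fixes n z :: nat and p l :: real
  assumes p: "0 \<le> p" "p \<le> 1" and pz: "p * real z \<le> c" and z: "n < 3 * z" and l: "1 \<le> l" "l < 3/2"
  shows "exp (\<eta> * (\<epsilon> * real n / 2) + \<kappa> * (F powr (1/s) * l)) * (((1 - p) * exp (-\<eta>) + p) ^ z * ((1 - p) + p * exp (-\<eta>)) ^ (n - z))
         \<le> drift_error n"
proof -
  have "((1 - p) + p * exp \<eta>) ^ z \<le> 1 + q0/2"
    by (rule gain_weight_power_le[OF p(1) pz c(1) eta(1) _ eta(3) q0_pos]) (use eta in simp)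
  with q0_le_1 have A: "((1 - p) + p * exp \<eta>) ^ z \<le> 2" by linarith
  have "(1 - p) * exp (-\<eta>) + p = exp (-\<eta>) * ((1 - p) + p * exp \<eta>)"
    by (simp add: algebra_simps exp_minus_inverse)
  then have "((1 - p) * exp (-\<eta>) + p) ^ z = exp (-\<eta> * real z) * ((1 - p) + p * exp \<eta>) ^ z"
    by (simp add: power_mult_distrib exp_of_nat_mult[symmetric] mult.commute)
  also have "\<dots> \<le> exp (-\<eta> * real z) * 2" using A by (intro mult_left_mono) auto
  finally have G0: "((1 - p) * exp (-\<eta>) + p) ^ z \<le> exp (-\<eta> * real z) * 2" .
  have "p * exp (-\<eta>) \<le> p * 1" using p eta by (intro mult_left_mono) auto
  then have G1: "((1 - p) + p * exp (-\<eta>)) ^ (n - z) \<le> 1" using p by (intro power_le_one) auto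
  have prod: "((1 - p) * exp (-\<eta>) + p) ^ z * ((1 - p) + p * exp (-\<eta>)) ^ (n - z) \<le> exp (-\<eta> * real z) * 2"
    using mult_mono[OF G0 G1] p by simp
  have lambda: "\<kappa> * (F powr (1/s) * l) \<le> \<kappa> * 3"
  proof -
    have "F powr (1/s) * l \<le> 2 * (3/2)"
      using growth(3) l by (intro mult_mono) auto
    then show ?thesis using kap by (intro mult_left_mono) auto
  qed
  have "exp (\<eta> * (\<epsilon> * real n / 2) + \<kappa> * (F powr (1/s) * l)) * (((1 - p) * exp (-\<eta>) + p) ^ z * ((1 - p) + p * exp (-\<eta>)) ^ (n - z))
      \<le> exp (\<eta> * (\<epsilon> * real n / 2) + \<kappa> * 3) * (exp (-\<eta> * real z) * 2)"
    using p by (intro mult_mono[OF _ prod]) (use lambda in auto)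
  also have "\<dots> = 2 * exp (3 * \<kappa>) * exp (\<eta> * (\<epsilon> * real n / 2 - real z))"
    by (simp add: mult_exp_exp algebra_simps)
  also have "\<dots> \<le> drift_error n"
  proof -
    have "\<epsilon> * real n \<le> (1/3) * real n" using eps by (intro mult_right_mono) auto
    then have "\<eta> * (\<epsilon> * real n / 2 - real z) \<le> \<eta> * (- real n / 6)"
      using z eta by (intro mult_left_mono) auto
    then show ?thesis by (simp add: drift_error_def)
  qed
  finally show ?thesis .
qed

lemma several_offspring_bound:
  fixes k :: nat and l z2 A B :: real
  assumes l: "3/2 \<le> l" and k: "l - 1/2 \<le> real k" "real k \<le> l + 1/2"
    and A: "0 \<le> A" "A \<le> 1 + q0/2" and B: "0 \<le> B" "B \<le> 1 - q0/2"
  shows "exp (z2 + \<kappa> * max 1 (l/F)) * A ^ k + exp (z2 + \<kappa> * (F powr (1/s) * l)) * B ^ k \<le> exp (z2 + \<kappa> * l)"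
proof -
  have "exp (\<kappa> * (max 1 (l/F) - l)) * A ^ k + exp (\<kappa> * (F powr (1/s) - 1) * l) * B ^ k \<le> 1"
    using success_term_le[OF l k(2) q0_pos F mu m kap A] failure_term_le[OF l k(1) q0_pos B growth(1)] by simp
  then have "exp (z2 + \<kappa> * l) * (exp (\<kappa> * (max 1 (l/F) - l)) * A ^ k + exp (\<kappa> * (F powr (1/s) - 1) * l) * B ^ k)
      \<le> exp (z2 + \<kappa> * l)" by (simp add: mult_left_le)
  then show ?thesis by (simp add: distrib_left mult_exp_exp algebra_simps)
qed

lemma single_offspring_bound:
  fixes x :: "bool list" and n :: nat and l :: real
  defines "p \<equiv> c / real n"
  assumes n: "3 \<le> n" and x: "length x = n" and l: "1 \<le> l" "l < 3/2"
  shows "exp (\<eta> * (\<epsilon> * real n / 2) + \<kappa> * (F powr (1/s) * l))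
           * (((1 - p) * exp (-\<eta>) + p) ^ zeros x * ((1 - p) + p * exp (-\<eta>)) ^ (n - zeros x))
         \<le> potential n x l + drift_error n"
proof (cases "3 * zeros x \<le> n")
  case True
  have "exp (\<eta> * (\<epsilon> * real n / 2) + \<kappa> * (F powr (1/s) * l))
           * (((1 - p) * exp (-\<eta>) + p) ^ zeros x * ((1 - p) + p * exp (-\<eta>)) ^ (n - zeros x))
        \<le> exp (\<eta> * (\<epsilon> * real n / 2 - real (zeros x)) + \<kappa> * l)"
    unfolding p_def by (rule single_offspring_few_zeros[OF _ refl True l]) (use n in simp)
  then show ?thesis using drift_error_nonneg[of n] by (simp add: potential_def)
next
  case False
  have "exp (\<eta> * (\<epsilon> * real n / 2) + \<kappa> * (F powr (1/s) * l))
           * (((1 - p) * exp (-\<eta>) + p) ^ zeros x * ((1 - p) + p * exp (-\<eta>)) ^ (n - zeros x))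
        \<le> drift_error n"
    by (rule single_offspring_many_zeros[OF _ _ _ _ l]) (use mutation_rate_bounds[OF n x] False in \<open>simp_all add: p_def\<close>)
  then show ?thesis by (intro add_increasing) (simp_all add: potential_def)
qed

lemma potential_drift_single_offspring:
  fixes f :: "bool list \<Rightarrow> real"
  assumes n: "3 \<le> n" and x: "length x = n" and l: "1 \<le> l" and k: "nat (round l) = 1"
  shows "(\<integral>\<^sup>+ys. \<integral>\<^sup>+i. ennreal (potential n (ys ! i) (lambda_update s F (f x < f (ys ! i)) l))
            \<partial>pmf_of_set (best_idx f ys) \<partial>offspring (c / real n) (nat (round l)) x)
         \<le> ennreal (potential n x l + drift_error n)"
proof -
  define p where "p = c / real n"
  define z2 where "z2 = \<epsilon> * real n / 2"
  define C where "C = exp (\<eta> * z2 + \<kappa> * (F powr (1/s) * l))"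
  let ?Z = "bitwise_prod (zero_weight \<eta>) x"
  have p0: "0 \<le> p" "p \<le> 1" using mutation_rate_bounds[OF n x] by (simp_all add: p_def)
  have l32: "l < 3/2" using nat_round_bounds(2)[OF l] k by simp
  have "(\<integral>\<^sup>+ys. \<integral>\<^sup>+i. ennreal (potential n (ys ! i) (lambda_update s F (f x < f (ys ! i)) l))
            \<partial>pmf_of_set (best_idx f ys) \<partial>offspring p 1 x)
        \<le> (\<integral>\<^sup>+ys. ennreal (C * prod_list (map ?Z ys)) \<partial>offspring p 1 x)"
  proof (rule nn_integral_nested_pmf_of_set_le)
    fix ys assume ys: "ys \<in> set_pmf (offspring p 1 x)"
    then obtain y where y: "ys = [y]" "y \<in> set_pmf (mutate p x)"
      using set_pmf_offspringD[OF ys] by (cases ys) auto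
    show "best_idx f ys \<noteq> {} \<and> finite (best_idx f ys)" using best_idx_nonempty_finite[of ys f] y by auto
    fix i assume "i \<in> best_idx f ys"
    then have yi: "ys ! i = y" using y by (auto simp: best_idx_def)
    have "potential n y (lambda_update s F (f x < f y) l) \<le> exp (\<eta> * (z2 - real (zeros y)) + \<kappa> * (F powr (1/s) * l))"
      using lambda_update_bounds(2)[OF l] kap by (simp add: potential_def z2_def)
    also have "\<dots> = C * ?Z y"
      using bitwise_prod_zero_weight[OF set_pmf_mutate_length[OF y(2)]] by (simp add: C_def mult_exp_exp algebra_simps)
    finally show "potential n (ys ! i) (lambda_update s F (f x < f (ys ! i)) l) \<le> C * prod_list (map ?Z ys)"
      using y yi by simp
  qed
  also have "\<dots> = ennreal C * (\<integral>\<^sup>+y. ennreal (?Z y) \<partial>mutate p x)"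
    by (simp add: C_def ennreal_mult' prod_list_nonneg bitwise_prod_nonneg zero_weight_def nn_integral_cmult
        nn_integral_offspring_prod_list)
  also have "\<dots> = ennreal (C * (((1 - p) * exp (-\<eta>) + p) ^ zeros x * ((1 - p) + p * exp (-\<eta>)) ^ (n - zeros x)))"
    using p0 x by (simp add: nn_integral_mutate_bitwise_prod zero_weight_def prod_list_map_bool C_def ennreal_mult')
  also have "\<dots> \<le> ennreal (potential n x l + drift_error n)"
    using single_offspring_bound[OF n x l l32] by (intro ennreal_leI) (simp add: C_def z2_def p_def)
  finally show ?thesis using k by (simp add: p_def z2_def)
qed

text \<open>The two terms bound the outcomes success and failure.  A failure means that no offspring improves \<open>x\<close>,
  since the best offspring of a strictly monotone function would otherwise be strictly better than \<open>x\<close>.\<close>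

lemma selected_offspring_potential_le:
  fixes f :: "bool list \<Rightarrow> real" and x :: "bool list" and n :: nat and l :: real
  defines "Y \<equiv> bitwise_prod (gain_weight \<eta>) x"
    and "C1 \<equiv> exp (\<eta> * (\<epsilon> * real n / 2 - real (zeros x)) + \<kappa> * max 1 (l / F))"
    and "C2 \<equiv> exp (\<eta> * (\<epsilon> * real n / 2 - real (zeros x)) + \<kappa> * (F powr (1/s) * l))"
  assumes f: "strictly_monotone n f" and x: "length x = n" and ys: "\<forall>y\<in>set ys. length y = n"
    and i: "i \<in> best_idx f ys"
  shows "potential n (ys ! i) (lambda_update s F (f x < f (ys ! i)) l)
         \<le> C1 * prod_list (map Y ys) + C2 * prod_list (map (\<lambda>y. of_bool (\<not> improves x y) * Y y) ys)"
proof -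
  define y where "y = ys ! i"
  have y: "y \<in> set ys" using i by (simp add: best_idx_def y_def)
  have Y0: "0 \<le> Y v" for v
    unfolding Y_def using eta bitwise_prod_gain_weight_ge_1[of \<eta> x v] by linarith
  have PY0: "0 \<le> prod_list (map Y ys)" and PN0: "0 \<le> prod_list (map (\<lambda>y. of_bool (\<not> improves x y) * Y y) ys)"
    using Y0 by (auto intro!: prod_list_nonneg)
  have zeros_y: "exp (-\<eta> * real (zeros y)) \<le> exp (-\<eta> * real (zeros x)) * prod_list (map Y ys)"
    unfolding Y_def using exp_zeros_le_prod_gain_weight[OF y] ys x eta y by simp
  show ?thesis
  proof (cases "f x < f y")
    case True
    have "potential n y (lambda_update s F True l) = exp (\<eta> * (\<epsilon> * real n / 2) + \<kappa> * max 1 (l / F)) * exp (-\<eta> * real (zeros y))"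
      by (simp add: potential_def lambda_update_def mult_exp_exp algebra_simps)
    also have "\<dots> \<le> C1 * prod_list (map Y ys)"
      using mult_left_mono[OF zeros_y, of "exp (\<eta> * (\<epsilon> * real n / 2) + \<kappa> * max 1 (l / F))"]
      by (simp add: C1_def mult_exp_exp algebra_simps)
    finally show ?thesis using True PN0 unfolding y_def by (simp add: C2_def add_increasing2)
  next
    case False
    then have "prod_list (map (\<lambda>y. of_bool (\<not> improves x y) * Y y) ys) = prod_list (map Y ys)"
      using best_idx_not_improves[OF f x ys i] by (simp add: y_def cong: map_cong)
    moreover have "potential n y (lambda_update s F False l)
        = exp (\<eta> * (\<epsilon> * real n / 2) + \<kappa> * (F powr (1/s) * l)) * exp (-\<eta> * real (zeros y))"
      by (simp add: potential_def lambda_update_def mult_exp_exp algebra_simps)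
    moreover have "\<dots> \<le> C2 * prod_list (map Y ys)"
      using mult_left_mono[OF zeros_y, of "exp (\<eta> * (\<epsilon> * real n / 2) + \<kappa> * (F powr (1/s) * l))"]
      by (simp add: C2_def mult_exp_exp algebra_simps)
    ultimately show ?thesis using False PY0 unfolding y_def by (simp add: C1_def add_increasing)
  qed
qed

lemma nn_integral_not_improves_le:
  assumes n: "3 \<le> n" and x: "length x = n" and zz: "\<epsilon> * real n / 2 < real (zeros x)"
  obtains r where "(\<integral>\<^sup>+y. ennreal (of_bool (\<not> improves x y) * bitwise_prod (gain_weight \<eta>) x y) \<partial>mutate (c / real n) x) = ennreal r"
    and "0 \<le> r" "r \<le> 1 - q0/2"
proof -
  define p where "p = c / real n"
  let ?I = "\<integral>\<^sup>+y. ennreal (of_bool (\<not> improves x y) * bitwise_prod (gain_weight \<eta>) x y) \<partial>mutate p x"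
  define A where "A = (1 - p + p * exp \<eta>) ^ zeros x"
  define D where "D = (1 - p) ^ (n - zeros x) * (1 - (1 - p) ^ zeros x)"
  have p0: "0 \<le> p" "p \<le> 1" using n c by (auto simp: p_def divide_le_eq)
  have D0: "0 \<le> D" using p0 by (simp add: D_def power_le_one)
  have bound: "?I + ennreal D \<le> ennreal A"
    using nn_integral_not_improves_gain_weight_le[OF p0, of \<eta> x] eta x by (simp add: A_def D_def)
  then have "?I \<noteq> \<top>" by (metis ennreal_add_eq_top ennreal_neq_top top.extremum_uniqueI)
  then obtain r where r: "?I = ennreal r" "0 \<le> r" by (cases ?I rule: ennreal_cases) auto
  have "0 \<le> A" using p0 by (simp add: A_def)
  then have "r + D \<le> A" using bound r D0 by (simp add: ennreal_plus[symmetric] del: ennreal_plus)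
  moreover have "p * real (zeros x) \<le> p * real n" using p0 x zeros_le_length[of x] by (intro mult_left_mono) auto
  then have "A \<le> 1 + q0/2"
    unfolding A_def using gain_weight_power_le[OF p0(1) _ c(1) eta(1) _ eta(3) q0_pos] eta n
    by (simp add: p_def algebra_simps)
  moreover have "q0 \<le> D"
    unfolding q0 D_def using improvement_prob_ge[OF _ p_def c _ zz eps(1)] n x zeros_le_length[of x] by simp
  ultimately have "r \<le> 1 - q0/2" by linarith
  with r that show ?thesis by (simp add: p_def)
qed

lemma potential_drift_several_offspring:
  fixes f :: "bool list \<Rightarrow> real"
  assumes n: "3 \<le> n" and f: "strictly_monotone n f" and x: "length x = n" and l: "1 \<le> l"
    and k: "nat (round l) \<noteq> 1" and zz: "\<epsilon> * real n / 2 < real (zeros x)"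
  shows "(\<integral>\<^sup>+ys. \<integral>\<^sup>+i. ennreal (potential n (ys ! i) (lambda_update s F (f x < f (ys ! i)) l))
            \<partial>pmf_of_set (best_idx f ys) \<partial>offspring (c / real n) (nat (round l)) x)
         \<le> ennreal (potential n x l + drift_error n)"
proof -
  define p where "p = c / real n"
  define k where "k = nat (round l)"
  define Y where "Y = bitwise_prod (gain_weight \<eta>) x"
  define N where "N = (\<lambda>y. of_bool (\<not> improves x y) * Y y)"
  define C1 where "C1 = exp (\<eta> * (\<epsilon> * real n / 2 - real (zeros x)) + \<kappa> * max 1 (l / F))"
  define C2 where "C2 = exp (\<eta> * (\<epsilon> * real n / 2 - real (zeros x)) + \<kappa> * (F powr (1/s) * l))"
  define A where "A = (1 - p + p * exp \<eta>) ^ zeros x"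
  obtain r where r: "(\<integral>\<^sup>+y. ennreal (N y) \<partial>mutate p x) = ennreal r" "0 \<le> r" "r \<le> 1 - q0/2"
    using nn_integral_not_improves_le[OF n x zz] unfolding N_def Y_def p_def by blast
  have p: "0 \<le> p" "p \<le> 1" using mutation_rate_bounds[OF n x] by (simp_all add: p_def)
  have k2: "2 \<le> k" using nat_round_bounds(3)[OF l] k by (simp add: k_def)
  have kl: "real k \<le> l + 1/2" "l - 1/2 \<le> real k" using nat_round_bounds[OF l] by (auto simp: k_def)
  have Y1: "1 \<le> Y y" for y unfolding Y_def using eta by (intro bitwise_prod_gain_weight_ge_1) auto
  then have Y0: "0 \<le> Y y" and N0: "0 \<le> N y" for y by (auto simp: N_def intro: order_trans[OF zero_le_one Y1])
  have "0 \<le> 1 - p + p * exp \<eta>" using p(1,2) by (intro add_nonneg_nonneg) auto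
  then have A: "0 \<le> A" "A \<le> 1 + q0/2" unfolding A_def using gain_expectation_le[OF n x] by (simp_all add: p_def)
  have "(\<integral>\<^sup>+ys. \<integral>\<^sup>+i. ennreal (potential n (ys ! i) (lambda_update s F (f x < f (ys ! i)) l))
            \<partial>pmf_of_set (best_idx f ys) \<partial>offspring p k x)
        \<le> (\<integral>\<^sup>+ys. ennreal (C1 * prod_list (map Y ys) + C2 * prod_list (map N ys)) \<partial>offspring p k x)"
  proof (rule nn_integral_nested_pmf_of_set_le)
    fix ys assume "ys \<in> set_pmf (offspring p k x)"
    then have ys: "length ys = k" "\<forall>y\<in>set ys. length y = n"
      using set_pmf_offspringD set_pmf_mutate_length x by blast+
    then have "ys \<noteq> []" using k2 by auto
    then show "best_idx f ys \<noteq> {} \<and> finite (best_idx f ys)" using best_idx_nonempty_finite by blast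
    fix i assume "i \<in> best_idx f ys"
    then show "potential n (ys ! i) (lambda_update s F (f x < f (ys ! i)) l)
        \<le> C1 * prod_list (map Y ys) + C2 * prod_list (map N ys)"
      using selected_offspring_potential_le[OF f x ys(2)] by (simp add: Y_def N_def C1_def C2_def)
  qed
  also have "\<dots> = ennreal (C1 * A ^ k + C2 * r ^ k)"
    using Y0 N0 A r nn_integral_gain_weight[OF p(1,2)]
    by (intro nn_integral_offspring_sum_prod_lists) (simp_all add: C1_def C2_def Y_def A_def)
  also have "\<dots> \<le> ennreal (potential n x l + drift_error n)"
  proof (rule ennreal_leI)
    have "C1 * A ^ k + C2 * r ^ k \<le> potential n x l"
      unfolding C1_def C2_def potential_def
      using several_offspring_bound[OF _ kl(2,1) A r(2,3)] kl k2 by simp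
    then show "C1 * A ^ k + C2 * r ^ k \<le> potential n x l + drift_error n" using drift_error_nonneg[of n] by simp
  qed
  finally show ?thesis by (simp add: p_def k_def)
qed

lemma potential_drift:
  fixes f :: "bool list \<Rightarrow> real"
  assumes "3 \<le> n" "strictly_monotone n f" "length x = n" "1 \<le> l" "\<epsilon> * real n / 2 < real (zeros x)"
  shows "(\<integral>\<^sup>+ys. \<integral>\<^sup>+i. ennreal (potential n (ys ! i) (lambda_update s F (f x < f (ys ! i)) l))
            \<partial>pmf_of_set (best_idx f ys) \<partial>offspring (c / real n) (nat (round l)) x)
         \<le> ennreal (potential n x l + drift_error n)"
  using potential_drift_single_offspring potential_drift_several_offspring assms
  by (cases "nat (round l) = 1") auto

lemma reach_Suc_le:
  assumes n: "3 \<le> n" and adv: "dyn_monotone n adv" and x: "length x = n" and l: "1 \<le> l"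
    and zz: "\<epsilon> * real n / 2 < real (zeros x)" and B: "0 \<le> B"
    and IH: "\<And>h x l. length x = n \<Longrightarrow> 1 \<le> l \<Longrightarrow> pmf (reach n c s F adv K h x l) True \<le> potential n x l + B"
  shows "pmf (reach n c s F adv (Suc K) h x l) True \<le> potential n x l + drift_error n + B"
proof -
  define f where "f = adv h x l"
  let ?child = "\<lambda>ys i. reach n c s F adv K (h @ [(x, l, ys)]) (ys ! i) (lambda_update s F (f x < f (ys ! i)) l)"
  let ?pot = "\<lambda>ys i. potential n (ys ! i) (lambda_update s F (f x < f (ys ! i)) l)"
  let ?M = "offspring (c / real n) (nat (round l)) x"
  have "0 \<le> \<epsilon> * real n" using eps by simp
  then have "x \<noteq> replicate n True" using zz by (auto simp: zeros_def)
  then have "ennreal (pmf (reach n c s F adv (Suc K) h x l) True)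
      = (\<integral>\<^sup>+ys. \<integral>\<^sup>+i. ennreal (pmf (?child ys i) True) \<partial>pmf_of_set (best_idx f ys) \<partial>?M)"
    by (simp add: ennreal_pmf_bind f_def)
  also have "\<dots> \<le> (\<integral>\<^sup>+ys. \<integral>\<^sup>+i. (ennreal (?pot ys i) + ennreal B) \<partial>pmf_of_set (best_idx f ys) \<partial>?M)"
  proof (rule nn_integral_nested_mono)
    fix ys i assume ys: "ys \<in> set_pmf ?M" and i: "i \<in> set_pmf (pmf_of_set (best_idx f ys))"
    have "ys \<noteq> []" using set_pmf_offspringD[OF ys] nat_round_bounds(3)[OF l] by auto
    then have "i < length ys" using i best_idx_nonempty_finite[of ys f] by (simp add: best_idx_def)
    then have "ys ! i \<in> set_pmf (mutate (c / real n) x)" using set_pmf_offspringD[OF ys] by simp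
    then have "length (ys ! i) = n" using set_pmf_mutate_length x by simp
    then show "ennreal (pmf (?child ys i) True) \<le> ennreal (?pot ys i) + ennreal B"
      using IH lambda_update_bounds(1)[OF l] B by (simp add: potential_def flip: ennreal_plus)
  qed
  also have "\<dots> = (\<integral>\<^sup>+ys. \<integral>\<^sup>+i. ennreal (?pot ys i) \<partial>pmf_of_set (best_idx f ys) \<partial>?M) + ennreal B"
    by (rule nn_integral_nested_add_const)
  also have "\<dots> \<le> ennreal (potential n x l + drift_error n) + ennreal B"
    using adv x l zz by (intro add_right_mono potential_drift[OF n]) (auto simp: f_def dyn_monotone_def)
  also have "\<dots> = ennreal (potential n x l + drift_error n + B)"
    using B drift_error_nonneg[of n] by (simp add: potential_def flip: ennreal_plus)
  finally have "ennreal (pmf (reach n c s F adv (Suc K) h x l) True) \<le> ennreal (potential n x l + drift_error n + B)" .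
  moreover have "0 \<le> potential n x l + drift_error n + B"
    using B drift_error_nonneg[of n] by (simp add: potential_def)
  ultimately show ?thesis using ennreal_le_iff by blast
qed

text \<open>The all-ones string has no zeros, so the potential is at least 1 there: the optimum is hit with
  probability at most the initial potential plus the accumulated drift.\<close>

lemma reach_le_potential:
  assumes n: "3 \<le> n" and adv: "dyn_monotone n adv"
  shows "length x = n \<Longrightarrow> 1 \<le> l \<Longrightarrow> pmf (reach n c s F adv K h x l) True \<le> potential n x l + real K * drift_error n"
proof (induction K arbitrary: h x l)
  case 0
  show ?case
  proof (cases "x = replicate n True")
    case True
    then have "1 \<le> potential n x l" using potential_ge_1[OF 0(2)] eps by (simp add: zeros_def)
    then show ?thesis using True by simp
  qed (simp add: potential_def)
next
  case (Suc K)
  show ?case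
  proof (cases "real (zeros x) \<le> \<epsilon> * real n / 2")
    case True
    then have "1 \<le> potential n x l" using potential_ge_1[OF Suc.prems(2)] by blast
    moreover have "0 \<le> real (Suc K) * drift_error n" using drift_error_nonneg[of n] by simp
    ultimately show ?thesis using pmf_le_1[of _ True] by (smt (verit))
  next
    case False
    then have "pmf (reach n c s F adv (Suc K) h x l) True \<le> potential n x l + drift_error n + real K * drift_error n"
      using drift_error_nonneg[of n] by (intro reach_Suc_le[OF n adv Suc.prems] Suc.IH) auto
    then show ?thesis by (simp add: algebra_simps)
  qed
qed

lemma prob_T_le_bound:
  assumes n: "3 \<le> n" and adv: "dyn_monotone n adv" and x0: "length x0 = n"
    and z0: "\<epsilon> * real n \<le> real (zeros x0)"
  shows "prob_T_le n c s F adv x0 K \<le> exp \<kappa> * exp (-(\<eta> * \<epsilon> / 2)) ^ n + real K * drift_error n"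
proof -
  have "prob_T_le n c s F adv x0 K = pmf (reach n c s F adv K [] x0 1) True"
    by (simp add: prob_T_le_def measure_pmf_single)
  also have "\<dots> \<le> potential n x0 1 + real K * drift_error n"
    using reach_le_potential[OF n adv x0] by simp
  also have "potential n x0 1 \<le> exp \<kappa> * exp (-(\<eta> * \<epsilon> / 2)) ^ n"
  proof -
    have "\<eta> * (\<epsilon> * real n / 2 - real (zeros x0)) \<le> \<eta> * (- (\<epsilon> * real n / 2))"
      using z0 eta by (intro mult_left_mono) auto
    then have "potential n x0 1 \<le> exp (\<kappa> + real n * (-(\<eta> * \<epsilon> / 2)))"
      by (simp add: potential_def algebra_simps)
    also have "\<dots> = exp \<kappa> * exp (-(\<eta> * \<epsilon> / 2)) ^ n" by (simp only: exp_add exp_of_nat_mult)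
    finally show ?thesis .
  qed
  finally show ?thesis by simp
qed

lemma exponential_runtime_whp:
  assumes "\<epsilon> \<le> e"
  shows "\<exists>\<delta>>0. \<exists>p :: nat \<Rightarrow> real. p \<longlonglongrightarrow> 0 \<and>
     (\<forall>n adv x0. dyn_monotone n adv \<longrightarrow> length x0 = n \<longrightarrow> real (zeros x0) \<ge> e * real n \<longrightarrow>
        prob_T_le n c s F adv x0 (nat \<lfloor>exp (\<delta> * real n / (ln (real n))\<^sup>2)\<rfloor>) \<le> p n)"
proof -
  define P where "P n = (if n < 3 then 1 else exp \<kappa> * exp (-(\<eta> * \<epsilon> / 2)) ^ n + 2 * exp (3 * \<kappa>) * exp (-(\<eta> / 12)) ^ n)"
    for n :: nat
  have "(\<lambda>n. exp \<kappa> * exp (-(\<eta> * \<epsilon> / 2)) ^ n + 2 * exp (3 * \<kappa>) * exp (-(\<eta> / 12)) ^ n)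
      \<longlonglongrightarrow> exp \<kappa> * 0 + 2 * exp (3 * \<kappa>) * 0"
    using eta eps by (intro tendsto_intros LIMSEQ_power_zero) auto
  then have "(\<lambda>n. exp \<kappa> * exp (-(\<eta> * \<epsilon> / 2)) ^ n + 2 * exp (3 * \<kappa>) * exp (-(\<eta> / 12)) ^ n) \<longlonglongrightarrow> 0"
    by simp
  then have "P \<longlonglongrightarrow> 0"
    by (rule Lim_transform_eventually) (auto simp: P_def eventually_sequentially intro!: exI[of _ 3])
  moreover have "prob_T_le n c s F adv x0 (nat \<lfloor>exp (\<eta> / 12 * real n / (ln (real n))\<^sup>2)\<rfloor>) \<le> P n"
    if adv: "dyn_monotone n adv" and x0: "length x0 = n" and "e * real n \<le> real (zeros x0)" for n adv x0
  proof (cases "n < 3")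
    case True
    then show ?thesis unfolding prob_T_le_def by (simp add: P_def measure_pmf.prob_le_1)
  next
    case False
    then have n: "3 \<le> n" by simp
    have "\<epsilon> * real n \<le> e * real n" using assms by (intro mult_right_mono) auto
    then have z0: "\<epsilon> * real n \<le> real (zeros x0)" using that(3) by linarith
    define K where "K = nat \<lfloor>exp (\<eta> / 12 * real n / (ln (real n))\<^sup>2)\<rfloor>"
    have "real K * drift_error n \<le> exp (\<eta> / 12 * real n) * drift_error n"
      using nat_floor_exp_div_ln_sq_le[OF n, of "\<eta> / 12"] eta drift_error_nonneg[of n]
      by (intro mult_right_mono) (auto simp: K_def)
    also have "\<dots> = 2 * exp (3 * \<kappa>) * exp (-(\<eta> / 12)) ^ n"
      by (simp add: drift_error_def mult_exp_exp algebra_simps flip: exp_of_nat_mult)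
    finally show ?thesis using prob_T_le_bound[OF n adv x0 z0, of K] False by (simp add: P_def K_def)
  qed
  moreover have "0 < \<eta> / 12" using eta by simp
  ultimately show ?thesis by blast
qed

end

section \<open>Choice of the constants\<close>

lemma powr_inverse_le:
  fixes F \<nu> s :: real
  assumes F: "1 < F" and \<nu>: "0 < \<nu>" and s: "ln F / ln (1 + \<nu>) \<le> s"
  shows "F powr (1/s) \<le> 1 + \<nu>"
proof -
  have s0: "0 < ln F / ln (1 + \<nu>)" using F \<nu> by simp
  have "F powr (1/s) = exp (ln F / s)" using F by (simp add: powr_def divide_inverse)
  also have "\<dots> \<le> exp (ln F / (ln F / ln (1 + \<nu>)))"
    using s s0 F by (intro exp_mono divide_left_mono mult_pos_pos) auto
  also have "\<dots> = 1 + \<nu>" using F \<nu> by simp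
  finally show ?thesis .
qed

text \<open>Only \<open>s1\<close> depends on the update strength: it makes the growth \<open>F powr (1/s)\<close> of \<open>\<lambda>\<close> after a
  failure small compared with \<open>1/\<kappa>\<close>.\<close>

lemma drift_setting_exists:
  fixes c F \<epsilon> :: real
  assumes c: "0 < c" "c \<le> 1" and F: "1 < F" and eps: "0 < \<epsilon>" "\<epsilon> \<le> 1/3"
  obtains \<eta> \<kappa> q0 \<mu> m s1 where "0 < s1" and "\<And>s. s1 \<le> s \<Longrightarrow> drift_setting c F s \<epsilon> \<eta> \<kappa> q0 \<mu> m"
proof -
  define q0 where "q0 = exp (-2 * c) * (1 - exp (-c * \<epsilon> / 2))"
  define \<eta> where "\<eta> = min (1/6) (ln (1 + q0/2) / (2 * c))"
  define \<mu> where "\<mu> = min (1/3) (1 - 1/F)"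
  define m where "m = - ln (1 - exp (-q0/6))"
  define \<kappa> where "\<kappa> = (q0 + m) / \<mu>"
  define \<nu> where "\<nu> = min 1 (min (q0/6) (c * \<eta> / 9) / \<kappa>)"
  have q0_pos: "0 < q0" using c eps by (simp add: q0_def)
  have eta: "0 < \<eta>" "\<eta> \<le> 1/6" "\<eta> \<le> ln (1 + q0/2) / (2 * c)" using q0_pos c by (auto simp: \<eta>_def)
  have "0 < m" using q0_pos by (simp add: m_def)
  moreover have "0 < \<mu>" using F by (simp add: \<mu>_def)
  ultimately have kap: "\<kappa> * \<mu> = q0 + m" "0 < \<kappa>" using q0_pos by (auto simp: \<kappa>_def)
  have "0 < min (q0/6) (c * \<eta> / 9)" using q0_pos eta c by simp
  then have nu: "0 < \<nu>" "\<nu> \<le> 1" "\<kappa> * \<nu> \<le> q0/6" "\<kappa> * \<nu> \<le> c * \<eta> / 9"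
    using kap mult_left_mono[of \<nu> "min (q0/6) (c * \<eta> / 9) / \<kappa>" \<kappa>] by (auto simp: \<nu>_def)
  show thesis
  proof
    show s1: "0 < ln F / ln (1 + \<nu>)" using F nu by simp
    fix s assume s: "ln F / ln (1 + \<nu>) \<le> s"
    have growth: "F powr (1/s) \<le> 1 + \<nu>" by (rule powr_inverse_le[OF F nu(1) s])
    have "0 < s" using s s1 by linarith
    have "\<kappa> * (F powr (1/s) - 1) \<le> \<kappa> * \<nu>" using growth kap by (intro mult_left_mono) auto
    then have growth_bounds: "\<kappa> * (F powr (1/s) - 1) \<le> q0/6" "\<kappa> * (F powr (1/s) - 1) \<le> c * \<eta> / 9"
        "F powr (1/s) \<le> 2"
      using nu growth by linarith+
    show "drift_setting c F s \<epsilon> \<eta> \<kappa> q0 \<mu> m"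
      by unfold_locales (fact c F \<open>0 < s\<close> eps q0_def eta \<mu>_def m_def kap growth_bounds)+
  qed
qed

theorem mainTheorem6:
  fixes c F :: real
  assumes "0 < c" and "c \<le> 1" and "1 < F"
  shows "\<forall>\<epsilon>>0. \<exists>s1>0. \<forall>s\<ge>s1. \<exists>\<delta>>0. \<exists>p :: nat \<Rightarrow> real. p \<longlonglongrightarrow> 0 \<and>
           (\<forall>n adv x0. dyn_monotone n adv \<longrightarrow> length x0 = n \<longrightarrow> real (zeros x0) \<ge> \<epsilon> * real n \<longrightarrow>
              prob_T_le n c s F adv x0 (nat \<lfloor>exp (\<delta> * real n / (ln (real n))\<^sup>2)\<rfloor>) \<le> p n)"
proof (intro allI impI)
  fix e :: real assume "0 < e"
  define \<epsilon> where "\<epsilon> = min e (1/3)"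
  have eps: "0 < \<epsilon>" "\<epsilon> \<le> 1/3" using \<open>0 < e\<close> by (auto simp: \<epsilon>_def)
  obtain \<eta> \<kappa> q0 \<mu> m s1 where "0 < s1" and setting: "\<And>s. s1 \<le> s \<Longrightarrow> drift_setting c F s \<epsilon> \<eta> \<kappa> q0 \<mu> m"
    by (rule drift_setting_exists[OF assms eps]) blast
  show "\<exists>s1>0. \<forall>s\<ge>s1. \<exists>\<delta>>0. \<exists>p :: nat \<Rightarrow> real. p \<longlonglongrightarrow> 0 \<and>
           (\<forall>n adv x0. dyn_monotone n adv \<longrightarrow> length x0 = n \<longrightarrow> real (zeros x0) \<ge> e * real n \<longrightarrow>
              prob_T_le n c s F adv x0 (nat \<lfloor>exp (\<delta> * real n / (ln (real n))\<^sup>2)\<rfloor>) \<le> p n)"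
  proof (rule exI[of _ s1], intro conjI allI impI)
    fix s assume "s1 \<le> s"
    then show "\<exists>\<delta>>0. \<exists>p :: nat \<Rightarrow> real. p \<longlonglongrightarrow> 0 \<and>
           (\<forall>n adv x0. dyn_monotone n adv \<longrightarrow> length x0 = n \<longrightarrow> real (zeros x0) \<ge> e * real n \<longrightarrow>
              prob_T_le n c s F adv x0 (nat \<lfloor>exp (\<delta> * real n / (ln (real n))\<^sup>2)\<rfloor>) \<le> p n)"
      by (rule drift_setting.exponential_runtime_whp[OF setting]) (simp add: \<epsilon>_def)
  qed fact
qed

end
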